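(* Let $A\subset\mathbb{Z}^n$ and $B\subset A$. If $B$ is strongly neighborly in $A$ then $B$ is neighborly in $A$; conversely, if $A$ is generic and $B$ is neighborly, then $B$ is strongly neighborly.
   Context: For $\alpha,\beta\in\mathbb{Z}^n$: $\alpha\ll\beta$ iff $\alpha_i<\beta_i$ for all $i$; $\vee$ is the componentwise maximum. $T_\eta=\eta-\mathbb{N}^n$, $T^o_\eta=\{\beta\in\mathbb{Z}^n:\beta\ll\eta\}$; for nonempty $X\subseteq\{1,\dots,n\}$ the $X$-face of $T_\eta$ is $\{\alpha\in T_\eta:\alpha_i=\eta_i\ \forall i\in X\}$. $A$ is generic if for all $\eta$ with $T^o_\eta\cap A=\emptyset$, each face of $T_\eta$ contains at most one element of $A$. A (finite, nonempty) $B\subseteq A$ is neighborly if $T^o_{\vee B}\cap A=\emptyset$; it is strongly neighborly if for every $B'\subseteq A$ with $\vee B'=\vee B$ one has $B'=B$. *)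

theory Defs
  imports Main
begin

(* Points of Z^n are modelled as functions 'n \<Rightarrow> int for a finite index type 'n
   (n = CARD('n)). *)

definition ll :: "('n::finite \<Rightarrow> int) \<Rightarrow> ('n \<Rightarrow> int) \<Rightarrow> bool" where
  "ll a b \<longleftrightarrow> (\<forall>i. a i < b i)"

definition join :: "('n::finite \<Rightarrow> int) set \<Rightarrow> ('n \<Rightarrow> int)" where
  "join B = (\<lambda>i. Max ((\<lambda>b. b i) ` B))"

definition Tcone :: "('n::finite \<Rightarrow> int) \<Rightarrow> ('n \<Rightarrow> int) set" where
  "Tcone \<eta> = {\<alpha>. \<forall>i. \<alpha> i \<le> \<eta> i}"

definition Tint :: "('n::finite \<Rightarrow> int) \<Rightarrow> ('n \<Rightarrow> int) set" where
  "Tint \<eta> = {\<beta>. ll \<beta> \<eta>}"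

definition face :: "'n set \<Rightarrow> ('n::finite \<Rightarrow> int) \<Rightarrow> ('n \<Rightarrow> int) set" where
  "face X \<eta> = {\<alpha> \<in> Tcone \<eta>. \<forall>i\<in>X. \<alpha> i = \<eta> i}"

definition generic :: "('n::finite \<Rightarrow> int) set \<Rightarrow> bool" where
  "generic A \<longleftrightarrow> (\<forall>\<eta>. Tint \<eta> \<inter> A = {} \<longrightarrow>
     (\<forall>X. X \<noteq> {} \<longrightarrow> (\<forall>a b. a \<in> face X \<eta> \<inter> A \<longrightarrow> b \<in> face X \<eta> \<inter> A \<longrightarrow> a = b)))"

definition neighborly :: "('n::finite \<Rightarrow> int) set \<Rightarrow> ('n \<Rightarrow> int) set \<Rightarrow> bool" where
  "neighborly A B \<longleftrightarrow> finite B \<and> B \<noteq> {} \<and> B \<subseteq> A \<and> Tint (join B) \<inter> A = {}"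

definition strongly_neighborly :: "('n::finite \<Rightarrow> int) set \<Rightarrow> ('n \<Rightarrow> int) set \<Rightarrow> bool" where
  "strongly_neighborly A B \<longleftrightarrow> finite B \<and> B \<noteq> {} \<and> B \<subseteq> A \<and>
     (\<forall>B'. B' \<subseteq> A \<and> finite B' \<and> B' \<noteq> {} \<and> join B' = join B \<longrightarrow> B' = B)"

end

theory Submission
  imports Defs
begin

(* A point strictly below the join of B in every coordinate is never a maximiser, so adding it
   to B or removing it from B leaves the join unchanged; strong neighborliness forbids both.
   Conversely, in a generic A every point of A with the same join as a neighborly B attains
   that join in some coordinate i, hence shares the face {i} with the maximiser of B in
   coordinate i, and genericity identifies the two. *)

lemma join_upper: "finite S \<Longrightarrow> b \<in> S \<Longrightarrow> b i \<le> join S i"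
  unfolding join_def by simp

lemma join_attained:
  assumes "finite S" "S \<noteq> {}"
  obtains b where "b \<in> S" "b i = join S i"
proof -
  have "Max ((\<lambda>b. b i) ` S) \<in> (\<lambda>b. b i) ` S" using assms by (intro Max_in) auto
  then show ?thesis using that unfolding join_def by auto
qed

lemma join_insert_below:
  assumes "finite S" "S \<noteq> {}" "\<And>i. a i \<le> join S i"
  shows "join (insert a S) = join S"
proof
  fix i
  show "join (insert a S) i = join S i"
    using assms unfolding join_def by (simp add: max_def)
qed

lemma Diff_strictly_below_join_nonempty:
  assumes "finite S" "S \<noteq> {}" "ll a (join S)"
  shows "S - {a} \<noteq> {}"
proof -
  \<comment> \<open>any coordinate will do; \<open>undefined\<close> just names one of the (nonempty) index type\<close>
  obtain b where "b \<in> S" "b undefined = join S undefined"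
    using join_attained[OF assms(1,2)] .
  moreover have "a undefined < join S undefined" using assms(3) unfolding ll_def by simp
  ultimately show ?thesis by auto
qed

lemma join_Diff_strictly_below:
  assumes S: "finite S" "S \<noteq> {}" and a: "ll a (join S)"
  shows "join (S - {a}) = join S"
proof
  fix i
  obtain b where b: "b \<in> S" "b i = join S i" using join_attained[OF S] .
  have "b \<noteq> a" using a b(2) unfolding ll_def by (metis less_irrefl)
  then have "join S i \<le> join (S - {a}) i" using join_upper[of "S - {a}" b i] S b by simp
  moreover obtain c where "c \<in> S - {a}" "c i = join (S - {a}) i"
    using join_attained[of "S - {a}"] Diff_strictly_below_join_nonempty[OF S a] S(1) by blast
  moreover have "c i \<le> join S i" if "c \<in> S - {a}" for c using join_upper[OF S(1)] that by simp
  ultimately show "join (S - {a}) i = join S i" by fastforce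
qed

lemma strongly_neighborly_imp_neighborly:
  assumes sn: "strongly_neighborly A B"
  shows "neighborly A B"
proof -
  have B: "finite B" "B \<noteq> {}" "B \<subseteq> A" using sn unfolding strongly_neighborly_def by auto
  have unique: "B' = B" if "B' \<subseteq> A" "finite B'" "B' \<noteq> {}" "join B' = join B" for B'
    using sn that unfolding strongly_neighborly_def by blast
  have "a \<notin> A" if a: "ll a (join B)" for a
  proof
    assume "a \<in> A"
    have "\<And>i. a i \<le> join B i" using a unfolding ll_def by (simp add: less_imp_le)
    then have "insert a B = B"
      using B \<open>a \<in> A\<close> by (intro unique) (auto simp: join_insert_below)
    moreover have "B - {a} = B"
      using join_Diff_strictly_below[OF B(1,2) a] Diff_strictly_below_join_nonempty[OF B(1,2) a] B
      by (intro unique) auto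
    ultimately show False by auto
  qed
  then show ?thesis using B unfolding neighborly_def Tint_def by auto
qed

lemma generic_same_join_subset:
  assumes gen: "generic A" and empty: "Tint (join B) \<inter> A = {}"
    and B: "finite B" "B \<noteq> {}" "B \<subseteq> A"
    and B': "finite B'" "B' \<subseteq> A" and eq: "join B' = join B"
  shows "B' \<subseteq> B"
proof
  fix b' assume b': "b' \<in> B'"
  then have "b' \<notin> Tint (join B)" using empty B' by auto
  then obtain i where "\<not> b' i < join B i" unfolding Tint_def ll_def by auto
  moreover have "b' i \<le> join B i" using join_upper[OF B'(1) b'] eq by simp
  ultimately have b'i: "b' i = join B i" by simp
  obtain b where b: "b \<in> B" "b i = join B i" using join_attained[OF B(1,2)] .
  have "b' \<in> face {i} (join B)" "b \<in> face {i} (join B)"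
    using b'i b join_upper[OF B'(1) b'] join_upper[OF B(1)] eq
    unfolding face_def Tcone_def by auto
  moreover have "b' \<in> A" "b \<in> A" using b' b(1) B(3) B'(2) by auto
  ultimately have "b' = b"
    using gen empty unfolding generic_def by blast
  then show "b' \<in> B" using b by simp
qed

lemma generic_neighborly_imp_strongly_neighborly:
  assumes gen: "generic A" and nb: "neighborly A B"
  shows "strongly_neighborly A B"
proof -
  have B: "finite B" "B \<noteq> {}" "B \<subseteq> A" and empty: "Tint (join B) \<inter> A = {}"
    using nb unfolding neighborly_def by auto
  have "B' = B" if B': "B' \<subseteq> A" "finite B'" "B' \<noteq> {}" and eq: "join B' = join B" for B'
  proof
    show "B' \<subseteq> B" using generic_same_join_subset[OF gen empty B B'(2,1) eq] .
    have "Tint (join B') \<inter> A = {}" using empty eq by simp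
    from generic_same_join_subset[OF gen this B'(2,3,1) B(1,3) eq[symmetric]]
    show "B \<subseteq> B'" .
  qed
  then show ?thesis using B unfolding strongly_neighborly_def by blast
qed

theorem mainTheorem4:
  fixes A B :: "('n::finite \<Rightarrow> int) set"
  assumes "B \<subseteq> A" and "finite B" and "B \<noteq> {}"
  shows "(strongly_neighborly A B \<longrightarrow> neighborly A B) \<and>
         (generic A \<and> neighborly A B \<longrightarrow> strongly_neighborly A B)"
  using strongly_neighborly_imp_neighborly generic_neighborly_imp_strongly_neighborly by blast

end
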